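(* Let $b\ge2$, $\alpha_1,\alpha_2>0$, and let $y\in[0,1)$ be a $b$-adic rational number. Then the scaling function of the pair $(L_{\alpha_1}^b,L_{\alpha_2}^{b,y})$, based on second-order oscillations, is $$\zeta(r_1,r_2)=\begin{cases}\alpha_1r_1+\alpha_2r_2, & \text{if } 1-\alpha_1r_1-\alpha_2r_2\ge0,\\ 1, & \text{if } 1-\alpha_1r_1-\alpha_2r_2<0.\end{cases}$$
   Context: The saw-tooth function is $\{x\}=x-\lfloor x\rfloor-\frac12$ if $x\notin\mathbb{Z}$ and $\{x\}=0$ if $x\in\mathbb{Z}$. For $\alpha>0$ the Lévy function is $L_\alpha^b(x)=\sum_{i\geq1}\{b^ix\}\,b^{-\alpha i}$ and $L_\alpha^{b,y}(x)=L_\alpha^b(x-y)$. $b$-adic grid: $\lambda=\lambda(j,k)=[kb^{-j},(k+1)b^{-j})$, $3\lambda=[(k-1)b^{-j},(k+2)b^{-j})$, $\Lambda_j$ the set of the $b^j$ such intervals contained in $[0,1)$. Second-order difference $\Delta_f^2(x,h)=f(x+2h)-2f(x+h)+f(x)$; oscillation $d_\lambda(f)=\sup\{|\Delta_f^2(x,h)|: x,x+2h\in3\lambda\}$; $d_\lambda^{(1)}=d_\lambda(L_{\alpha_1}^b)$, $d_\lambda^{(2)}=d_\lambda(L_{\alpha_2}^{b,y})$. Structure function $S(r,j)=b^{-j}\sum_{\lambda\in\Lambda_j}(d_\lambda^{(1)})^{r_1}(d_\lambda^{(2)})^{r_2}$, scaling function $\zeta(r)=\liminf_{j\to\infty}\frac{\log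 S(r,j)}{\log b^{-j}}$. *)

theory Defs
  imports "HOL-Analysis.Analysis" "HOL-Library.Liminf_Limsup"
begin

definition sawtooth :: "real \<Rightarrow> real" where
  "sawtooth x = (if x \<in> \<int> then 0 else x - of_int \<lfloor>x\<rfloor> - 1/2)"

definition levy :: "nat \<Rightarrow> real \<Rightarrow> real \<Rightarrow> real" where
  "levy b \<alpha> x = (\<Sum>i. sawtooth (real b ^ (Suc i) * x) * real b powr (- \<alpha> * real (Suc i)))"

definition levy_shift :: "nat \<Rightarrow> real \<Rightarrow> real \<Rightarrow> real \<Rightarrow> real" where
  "levy_shift b \<alpha> y x = levy b \<alpha> (x - y)"

definition Delta2 :: "(real \<Rightarrow> real) \<Rightarrow> real \<Rightarrow> real \<Rightarrow> real" where
  "Delta2 f x h = f (x + 2*h) - 2 * f (x + h) + f x"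

definition three_lambda :: "nat \<Rightarrow> nat \<Rightarrow> nat \<Rightarrow> real set" where
  "three_lambda b j k = {(real k - 1) / real b ^ j ..< (real k + 2) / real b ^ j}"

definition osc2 :: "(real \<Rightarrow> real) \<Rightarrow> nat \<Rightarrow> nat \<Rightarrow> nat \<Rightarrow> real" where
  "osc2 f b j k = Sup {\<bar>Delta2 f x h\<bar> | x h. x \<in> three_lambda b j k \<and> x + 2*h \<in> three_lambda b j k}"

text \<open>Structure function S(r,j); Lambda_j is indexed by k < b^j.\<close>
definition structure_fun :: "nat \<Rightarrow> real \<Rightarrow> real \<Rightarrow> real \<Rightarrow> real \<Rightarrow> real \<Rightarrow> nat \<Rightarrow> real" where
  "structure_fun b \<alpha>1 \<alpha>2 y r1 r2 j =
     real b powr (- real j) *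
     (\<Sum>k<b ^ j. osc2 (levy b \<alpha>1) b j k powr r1 * osc2 (levy_shift b \<alpha>2 y) b j k powr r2)"

definition scaling_fun :: "nat \<Rightarrow> real \<Rightarrow> real \<Rightarrow> real \<Rightarrow> real \<Rightarrow> real \<Rightarrow> ereal" where
  "scaling_fun b \<alpha>1 \<alpha>2 y r1 r2 =
     liminf (\<lambda>j. ereal (ln (structure_fun b \<alpha>1 \<alpha>2 y r1 r2 j) / ln (real b powr (- real j))))"

end

theory Submission
  imports Defs "HOL-Real_Asymp.Real_Asymp"
begin

(*
  By linearity, Delta2 L_alpha (x, h) = sum_i b^(-alpha i) Delta2 {b^i .} (x, h), and the i-th
  sawtooth {b^i .} is affine on every interval free of points of b^(-i) Z.  Hence, if I is the
  least level at which 3 lambda meets the grid y + b^(-I) Z, all terms below I vanish on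
  3 lambda, the remaining ones sum to O(b^(-alpha I)), and a second difference taken at a grid
  point of level I with a tiny step h attains b^(-alpha (I+1)) / 2: the oscillation of
  L_alpha^(b,y) on lambda is b^(-alpha I) up to constants.  For b-adic y the levels for y and for
  0 differ by a bounded amount, so with beta = alpha1 r1 + alpha2 r2 the structure function is
  comparable to b^(-j) sum_lambda b^(-beta I(lambda)).  At most 3 (b^I + 2) cells have level I,
  while the b^(j-2) cells k = b^2 t + 2 have level >= j - 1 and the cell k = 0 has level 0; so
  this sum lies between c b^(max(0, 1 - beta) j) and C (j + 1) b^(max(0, 1 - beta) j), which
  gives zeta = min(beta, 1).
*)

section \<open>Saw-tooth function and second differences\<close>

lemma sawtooth_abs_le: "\<bar>sawtooth x\<bar> \<le> 1/2"
proof -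
  have "\<bar>x - of_int \<lfloor>x\<rfloor> - 1/2\<bar> \<le> 1/2"
    unfolding abs_le_iff by linarith
  then show ?thesis unfolding sawtooth_def by auto
qed

lemma sawtooth_Ints: "x \<in> \<int> \<Longrightarrow> sawtooth x = 0"
  by (simp add: sawtooth_def)

lemma sawtooth_of_int_add: "sawtooth (of_int w + t) = sawtooth t"
proof -
  have "of_int w + t \<in> \<int> \<longleftrightarrow> t \<in> \<int>"
    by (metis Ints_add Ints_diff Ints_of_int add_diff_cancel_left')
  moreover have "\<lfloor>of_int w + t\<rfloor> = w + \<lfloor>t\<rfloor>" by linarith
  ultimately show ?thesis by (simp add: sawtooth_def)
qed

lemma sawtooth_eq_affine:
  assumes "of_int m < x" "x < of_int m + 1"
  shows "sawtooth x = x - of_int m - 1/2"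
proof -
  have "\<lfloor>x\<rfloor> = m" using assms by linarith
  moreover have "x \<notin> \<int>"
    using assms by (metis Ints_cases floor_of_int less_irrefl \<open>\<lfloor>x\<rfloor> = m\<close>)
  ultimately show ?thesis by (simp add: sawtooth_def)
qed

lemma sawtooth_half_of_nat: "sawtooth (real n / 2) = 0"
proof (cases "even n")
  case True
  then show ?thesis by (auto simp: sawtooth_Ints)
next
  case False
  then obtain t where "n = 2 * t + 1" using oddE by blast
  then have "real n / 2 = of_int (int t) + 1/2" by simp
  moreover have "sawtooth (of_int (int t) + 1/2) = 0"
    using sawtooth_eq_affine[of "int t" "of_int (int t) + 1/2"] by simp
  ultimately show ?thesis by metis
qed

lemma Delta2_abs_le:
  assumes "\<And>t. \<bar>f t\<bar> \<le> M"
  shows "\<bar>Delta2 f x h\<bar> \<le> 4 * M"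
  using assms[of x] assms[of "x + h"] assms[of "x + 2*h"] unfolding Delta2_def by linarith

lemma Delta2_cmult: "Delta2 (\<lambda>t. c * f t) x h = c * Delta2 f x h"
  unfolding Delta2_def by (simp add: algebra_simps)

lemma Delta2_suminf:
  assumes "\<And>x. summable (\<lambda>i. f i x)"
  shows "summable (\<lambda>i. Delta2 (f i) x h)"
    and "Delta2 (\<lambda>x. \<Sum>i. f i x) x h = (\<Sum>i. Delta2 (f i) x h)"
proof -
  have "(\<lambda>i. Delta2 (f i) x h) sums Delta2 (\<lambda>x. \<Sum>i. f i x) x h"
    unfolding Delta2_def
    by (intro sums_add sums_diff sums_mult summable_sums assms)
  then show "summable (\<lambda>i. Delta2 (f i) x h)"
    and "Delta2 (\<lambda>x. \<Sum>i. f i x) x h = (\<Sum>i. Delta2 (f i) x h)"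
    by (auto simp: sums_iff)
qed

section \<open>Second differences of the Levy function\<close>

lemma levy_eq_suminf:
  assumes "b > 0"
  shows "levy b \<alpha> = (\<lambda>x. \<Sum>i. (real b powr (-\<alpha>)) ^ Suc i * sawtooth (real b ^ Suc i * x))"
proof -
  have "real b powr (- \<alpha> * real n) = (real b powr (-\<alpha>)) ^ n" for n
    using assms by (simp add: powr_realpow[symmetric] powr_powr)
  then show ?thesis unfolding levy_def by (simp only: mult.commute)
qed

lemma summable_levy_terms:
  assumes "b \<ge> 2" "\<alpha> > 0"
  shows "summable (\<lambda>i. (real b powr (-\<alpha>)) ^ Suc i * sawtooth (real b ^ Suc i * x))"
proof (rule summable_comparison_test')
  define q where "q = real b powr (-\<alpha>)"
  have q: "0 < q" "q < 1"
    using assms by (auto simp: q_def powr_minus_divide)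
  then show "summable (\<lambda>i. q ^ Suc i)" by (simp add: summable_geometric)
  show "norm (q ^ Suc i * sawtooth (real b ^ Suc i * x)) \<le> q ^ Suc i" for i
    using sawtooth_abs_le[of "real b ^ Suc i * x"] q by (simp add: abs_mult)
qed

lemma Delta2_levy:
  assumes "b \<ge> 2" "\<alpha> > 0"
  defines "q \<equiv> real b powr (-\<alpha>)"
  shows "summable (\<lambda>i. q ^ Suc i * Delta2 (\<lambda>t. sawtooth (real b ^ Suc i * t)) x h)"
    and "Delta2 (levy b \<alpha>) x h = (\<Sum>i. q ^ Suc i * Delta2 (\<lambda>t. sawtooth (real b ^ Suc i * t)) x h)"
proof -
  let ?f = "\<lambda>i t. q ^ Suc i * sawtooth (real b ^ Suc i * t)"
  have "levy b \<alpha> = (\<lambda>t. \<Sum>i. ?f i t)"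
    unfolding q_def using assms(1) by (simp add: levy_eq_suminf)
  moreover have "Delta2 (?f i) x h = q ^ Suc i * Delta2 (\<lambda>t. sawtooth (real b ^ Suc i * t)) x h" for i
    by (rule Delta2_cmult)
  ultimately show "summable (\<lambda>i. q ^ Suc i * Delta2 (\<lambda>t. sawtooth (real b ^ Suc i * t)) x h)"
    and "Delta2 (levy b \<alpha>) x h = (\<Sum>i. q ^ Suc i * Delta2 (\<lambda>t. sawtooth (real b ^ Suc i * t)) x h)"
    using Delta2_suminf[of ?f x h] summable_levy_terms[OF assms(1,2)] unfolding q_def by simp_all
qed

definition meets_grid :: "nat \<Rightarrow> nat \<Rightarrow> real \<Rightarrow> real set \<Rightarrow> bool" where
  "meets_grid b I y A \<longleftrightarrow> (\<exists>z::int. y + of_int z / real b ^ I \<in> A)"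

lemma Delta2_sawtooth_off_grid:
  assumes "b > 0" and "\<not> meets_grid b I 0 {a..<c}"
    and "x \<in> {a..<c}" "x + 2*h \<in> {a..<c}"
  shows "Delta2 (\<lambda>t. sawtooth (real b ^ I * t)) x h = 0"
proof -
  define s where "s = real b ^ I"
  define m where "m = \<lfloor>s * a\<rfloor>"
  have s: "s > 0" using assms(1) by (simp add: s_def)
  have off: "of_int z / s \<notin> {a..<c}" for z
    using assms(2) unfolding meets_grid_def s_def by auto
  have "a < c" using assms(3) by simp
  have "of_int m / s \<le> a" using s by (simp add: m_def pos_divide_le_eq mult.commute)
  then have "of_int m / s < a" using off[of m] \<open>a < c\<close> by auto
  then have "of_int m < s * a" using s by (simp add: pos_divide_less_eq mult.commute)
  moreover have "s * c \<le> of_int m + 1"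
    using off[of "m + 1"] s by (auto simp: m_def field_simps) linarith
  ultimately have affine: "sawtooth (s * u) = s * u - of_int m - 1/2" if "u \<in> {a..<c}" for u
    using that s by (intro sawtooth_eq_affine) (auto intro: less_le_trans mult_strict_left_mono)
  have "x + h \<in> {a..<c}" using assms(3,4) by auto
  from affine[OF this] affine[OF assms(3)] affine[OF assms(4)] show ?thesis
    unfolding Delta2_def s_def[symmetric] by (simp add: algebra_simps)
qed

lemma Delta2_sawtooth_grid_point:
  assumes "b \<ge> 2" "L \<le> I"
  shows "Delta2 (\<lambda>t. sawtooth (real b ^ I * t)) (of_int z / real b ^ L) (1 / (2 * real b ^ n))
    = (if I < n then 1/2 else 0)"
proof -
  define p where "p = of_int z / real b ^ L"
  define h where "h = 1 / (2 * real b ^ n)"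
  define w where "w = z * int b ^ (I - L)"
  have "real b ^ I = real b ^ (I - L) * real b ^ L"
    using assms(2) by (simp flip: power_add)
  then have w: "real b ^ I * p = of_int w"
    using assms(1) by (simp add: w_def p_def)
  have D: "Delta2 (\<lambda>t. sawtooth (real b ^ I * t)) p h
      = sawtooth (of_int w + 2 * (real b ^ I * h)) - 2 * sawtooth (of_int w + real b ^ I * h)"
    unfolding Delta2_def distrib_left w by (simp add: sawtooth_Ints mult.left_commute)
  show ?thesis
  proof (cases "I < n")
    case True
    define t where "t = 1 / real b ^ (n - I)"
    have t: "0 < t" "t < 1" unfolding t_def using assms(1) True by auto
    have "real b ^ n = real b ^ (n - I) * real b ^ I"
      using True by (simp flip: power_add)
    then have th: "real b ^ I * h = t / 2" unfolding t_def h_def using assms(1) by simp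
    have "Delta2 (\<lambda>t. sawtooth (real b ^ I * t)) p h = sawtooth t - 2 * sawtooth (t / 2)"
      unfolding D th by (simp add: sawtooth_of_int_add)
    also have "\<dots> = 1/2"
      using sawtooth_eq_affine[of 0 t] sawtooth_eq_affine[of 0 "t/2"] t by simp
    finally show ?thesis using True by (simp add: p_def h_def)
  next
    case False
    have "real b ^ I = real b ^ (I - n) * real b ^ n"
      using False by (simp flip: power_add)
    then have eh: "real b ^ I * h = real (b ^ (I - n)) / 2" unfolding h_def using assms(1) by simp
    have "Delta2 (\<lambda>t. sawtooth (real b ^ I * t)) p h = 0"
      unfolding D eh using sawtooth_half_of_nat[of "b ^ (I - n)"]
      by (simp add: sawtooth_of_int_add sawtooth_Ints)
    then show ?thesis using False by (simp add: p_def h_def)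
  qed
qed

lemma Delta2_sawtooth_abs_le: "\<bar>Delta2 (\<lambda>t. sawtooth (s * t)) x h\<bar> \<le> 2"
  using Delta2_abs_le[of "\<lambda>t. sawtooth (s * t)" "1/2"] sawtooth_abs_le by simp

lemma Delta2_levy_abs_le:
  assumes "b \<ge> 2" "\<alpha> > 0"
    and off_grid: "\<And>I. I < L \<Longrightarrow> \<not> meets_grid b I 0 {a..<c}"
    and "x \<in> {a..<c}" "x + 2*h \<in> {a..<c}"
  shows "\<bar>Delta2 (levy b \<alpha>) x h\<bar> \<le> 2 / (1 - real b powr (-\<alpha>)) * (real b powr (-\<alpha>)) ^ L"
proof -
  define q where "q = real b powr (-\<alpha>)"
  have q: "0 < q" "q < 1"
    using assms(1,2) by (auto simp: q_def powr_minus_divide)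
  define f where "f i = q ^ Suc i * Delta2 (\<lambda>t. sawtooth (real b ^ Suc i * t)) x h" for i
  define k where "k = L - 1"
  have "f i = 0" if "i < k" for i
    using Delta2_sawtooth_off_grid[OF _ off_grid assms(4,5), of "Suc i"] that assms(1)
    by (simp add: f_def k_def)
  then have "(\<lambda>i. f (i + k)) sums Delta2 (levy b \<alpha>) x h"
    using Delta2_levy[OF assms(1,2)] sums_zero_iff_shift[of k f]
    by (simp add: f_def q_def summable_sums)
  then have "\<bar>Delta2 (levy b \<alpha>) x h\<bar> = norm (\<Sum>i. f (i + k))"
    by (simp add: sums_iff)
  also have "\<dots> \<le> (\<Sum>i. 2 * q ^ Suc k * q ^ i)"
  proof (rule norm_suminf_le)
    show "norm (f (i + k)) \<le> 2 * q ^ Suc k * q ^ i" for i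
      using Delta2_sawtooth_abs_le[of "real b ^ Suc (i + k)" x h] q
      by (simp add: f_def abs_mult power_add mult_ac mult_left_mono)
    show "summable (\<lambda>i. 2 * q ^ Suc k * q ^ i)"
      using q by (simp add: summable_geometric)
  qed
  also have "\<dots> = 2 / (1 - q) * q ^ Suc k"
    using q by (simp add: suminf_mult suminf_geometric)
  also have "\<dots> \<le> 2 / (1 - q) * q ^ L"
    using q by (intro mult_left_mono power_decreasing) (auto simp: k_def)
  finally show ?thesis unfolding q_def .
qed

lemma exists_Delta2_levy_ge:
  assumes "b \<ge> 2" "\<alpha> > 0"
    and off_grid: "\<And>I. I < L \<Longrightarrow> \<not> meets_grid b I 0 {a..<c}"
    and "meets_grid b L 0 {a..<c}"
  obtains x h where "x \<in> {a..<c}" "x + 2*h \<in> {a..<c}"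
    "(real b powr (-\<alpha>)) ^ Suc L / 2 \<le> \<bar>Delta2 (levy b \<alpha>) x h\<bar>"
proof -
  define q where "q = real b powr (-\<alpha>)"
  have q: "0 < q" using assms(1) by (simp add: q_def)
  obtain z :: int where p: "of_int z / real b ^ L \<in> {a..<c}"
    using assms(4) by (auto simp: meets_grid_def)
  define p where "p = of_int z / real b ^ L"
  have "1 / real b < 1" "c - p > 0" using assms(1) p by (auto simp: p_def)
  then obtain n0 where n0: "(1 / real b) ^ n0 < c - p"
    using real_arch_pow_inv by blast
  define n where "n = n0 + L + 2"
  have "(1 / real b) ^ n \<le> (1 / real b) ^ n0"
    unfolding n_def using assms(1) by (intro power_decreasing) auto
  then have "1 / real b ^ n < c - p" using n0 by (simp add: power_one_over)
  define h where "h = 1 / (2 * real b ^ n)"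
  have ph: "p \<in> {a..<c}" "p + 2 * h \<in> {a..<c}"
    using p \<open>1 / real b ^ n < c - p\<close> by (auto simp: p_def h_def add_increasing2)
  define f where "f i = q ^ Suc i * Delta2 (\<lambda>t. sawtooth (real b ^ Suc i * t)) p h" for i
  have f: "f i = (if L \<le> Suc i \<and> Suc i < n then q ^ Suc i / 2 else 0)" for i
  proof (cases "Suc i < L")
    case True
    then show ?thesis
      using Delta2_sawtooth_off_grid[OF _ off_grid[OF True] ph] assms(1) by (simp add: f_def)
  next
    case False
    then show ?thesis
      using Delta2_sawtooth_grid_point[OF assms(1), of L "Suc i" z n] by (simp add: f_def p_def h_def)
  qed
  have "summable f"
    unfolding f_def q_def by (rule Delta2_levy(1)[OF assms(1,2)])
  have "q ^ Suc L / 2 = sum f {L}" by (simp add: f n_def)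
  also have "\<dots> \<le> (\<Sum>i. f i)"
    by (rule sum_le_suminf[OF \<open>summable f\<close>]) (use q in \<open>auto simp: f\<close>)
  also have "\<dots> = Delta2 (levy b \<alpha>) p h"
    using Delta2_levy(2)[OF assms(1,2)] by (simp add: f_def q_def)
  finally show ?thesis using that ph unfolding q_def by force
qed

section \<open>Grid levels of the enlarged b-adic intervals\<close>

lemma meets_grid_mono:
  assumes "b > 0" "meets_grid b I y A" "I \<le> I'"
  shows "meets_grid b I' y A"
proof -
  obtain z :: int where "y + of_int z / real b ^ I \<in> A"
    using assms(2) by (auto simp: meets_grid_def)
  moreover have "real b ^ I' = real b ^ I * real b ^ (I' - I)"
    using assms(3) by (simp flip: power_add)
  then have "of_int (z * int b ^ (I' - I)) / real b ^ I' = of_int z / real b ^ I"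
    using assms(1) by simp
  ultimately show ?thesis unfolding meets_grid_def by metis
qed

lemma meets_grid_translate:
  "meets_grid b I y {a..<c} \<longleftrightarrow> meets_grid b I 0 {a - y..<c - y}"
  unfolding meets_grid_def by (intro ex_cong1) auto

lemma meets_grid_adic_shift:
  assumes "b > 0" "y' = y + of_int w / real b ^ m" "m \<le> I"
  shows "meets_grid b I y' A \<longleftrightarrow> meets_grid b I y A"
proof -
  define v where "v = w * int b ^ (I - m)"
  have "real b ^ I = real b ^ m * real b ^ (I - m)"
    using assms(3) by (simp flip: power_add)
  then have "of_int w / real b ^ m = of_int v / real b ^ I"
    using assms(1) by (simp add: v_def)
  then have "y' + of_int z / real b ^ I = y + of_int (v + z) / real b ^ I" for z
    using assms(2) by (simp add: add_divide_distrib)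
  moreover have "y + of_int z / real b ^ I = y' + of_int (z - v) / real b ^ I" for z
    using \<open>of_int w / real b ^ m = of_int v / real b ^ I\<close> assms(2) by (simp add: diff_divide_distrib)
  ultimately show ?thesis unfolding meets_grid_def by metis
qed

definition adic_level :: "nat \<Rightarrow> real \<Rightarrow> nat \<Rightarrow> nat \<Rightarrow> nat" where
  "adic_level b y j k = (LEAST I. meets_grid b I y (three_lambda b j k))"

lemma meets_grid_three_lambda:
  assumes "b > 0"
  shows "meets_grid b j y (three_lambda b j k)"
proof -
  define u where "u = real b ^ j * ((real k - 1) / real b ^ j - y)"
  have "y + of_int \<lceil>u\<rceil> / real b ^ j = (real k - 1) / real b ^ j + (\<lceil>u\<rceil> - u) / real b ^ j"
    "(real k + 2) / real b ^ j = (real k - 1) / real b ^ j + 3 / real b ^ j"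
    using assms by (simp_all add: u_def field_simps)
  moreover have "0 \<le> \<lceil>u\<rceil> - u" "\<lceil>u\<rceil> - u < 3" by linarith+
  ultimately have "(real k - 1) / real b ^ j \<le> y + of_int \<lceil>u\<rceil> / real b ^ j"
    "y + of_int \<lceil>u\<rceil> / real b ^ j < (real k + 2) / real b ^ j"
    using assms by (simp_all add: divide_strict_right_mono)
  then show ?thesis unfolding meets_grid_def three_lambda_def by auto
qed

lemma adic_level_le: "b > 0 \<Longrightarrow> adic_level b y j k \<le> j"
  unfolding adic_level_def by (rule Least_le) (rule meets_grid_three_lambda)

lemma meets_grid_adic_level:
  "b > 0 \<Longrightarrow> meets_grid b (adic_level b y j k) y (three_lambda b j k)"
  unfolding adic_level_def by (rule LeastI) (rule meets_grid_three_lambda)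

lemma not_meets_grid_below_adic_level:
  "I < adic_level b y j k \<Longrightarrow> \<not> meets_grid b I y (three_lambda b j k)"
  unfolding adic_level_def by (rule not_less_Least)

lemma adic_level_shift_le:
  assumes "b > 0" "y' = y + of_int w / real b ^ m"
  shows "adic_level b y' j k \<le> adic_level b y j k + m"
proof -
  have "meets_grid b (adic_level b y j k + m) y (three_lambda b j k)"
    using meets_grid_mono[OF assms(1) meets_grid_adic_level[OF assms(1)]] by simp
  then have "meets_grid b (adic_level b y j k + m) y' (three_lambda b j k)"
    using meets_grid_adic_shift[OF assms] by simp
  then show ?thesis unfolding adic_level_def[of b y'] by (rule Least_le)
qed

lemma adic_level_shift_dist:
  assumes "b > 0" "y = of_int w / real b ^ m"
  shows "\<bar>real (adic_level b y j k) - real (adic_level b 0 j k)\<bar> \<le> m"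
proof -
  have "y = 0 + of_int w / real b ^ m" "0 = y + of_int (- w) / real b ^ m"
    using assms(2) by simp_all
  from adic_level_shift_le[OF assms(1) this(1), of j k] adic_level_shift_le[OF assms(1) this(2), of j k]
  show ?thesis by linarith
qed

section \<open>Oscillations\<close>

lemma Delta2_levy_shift: "Delta2 (levy_shift b \<alpha> y) x h = Delta2 (levy b \<alpha>) (x - y) h"
  unfolding Delta2_def levy_shift_def by (simp add: algebra_simps)

lemma osc2_levy_shift_bounds:
  fixes y :: real and j k :: nat
  assumes "b \<ge> 2" "\<alpha> > 0"
  defines "q \<equiv> real b powr (-\<alpha>)" and "L \<equiv> adic_level b y j k"
  shows "q ^ Suc L / 2 \<le> osc2 (levy_shift b \<alpha> y) b j k"
    and "osc2 (levy_shift b \<alpha> y) b j k \<le> 2 / (1 - q) * q ^ L"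
proof -
  define lo where "lo = (real k - 1) / real b ^ j - y"
  define hi where "hi = (real k + 2) / real b ^ j - y"
  have in_three_lambda: "x \<in> three_lambda b j k \<longleftrightarrow> x - y \<in> {lo..<hi}" for x
    unfolding three_lambda_def lo_def hi_def by auto
  have grid: "meets_grid b I y (three_lambda b j k) \<longleftrightarrow> meets_grid b I 0 {lo..<hi}" for I
    unfolding three_lambda_def lo_def hi_def by (rule meets_grid_translate)
  have off_grid: "\<not> meets_grid b I 0 {lo..<hi}" if "I < L" for I
    using not_meets_grid_below_adic_level[OF that[unfolded L_def]] grid by simp
  define S where "S = {\<bar>Delta2 (levy_shift b \<alpha> y) x h\<bar> | x h.
    x \<in> three_lambda b j k \<and> x + 2*h \<in> three_lambda b j k}"
  have osc: "osc2 (levy_shift b \<alpha> y) b j k = Sup S"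
    unfolding osc2_def S_def ..
  have ub: "s \<le> 2 / (1 - q) * q ^ L" if s: "s \<in> S" for s
  proof -
    obtain x h where "s = \<bar>Delta2 (levy b \<alpha>) (x - y) h\<bar>"
      "x - y \<in> {lo..<hi}" "x - y + 2*h \<in> {lo..<hi}"
      using s in_three_lambda by (auto simp: S_def Delta2_levy_shift algebra_simps)
    with Delta2_levy_abs_le[OF assms(1,2) off_grid] show ?thesis by (simp add: q_def)
  qed
  obtain x h where xh: "x \<in> {lo..<hi}" "x + 2*h \<in> {lo..<hi}" "q ^ Suc L / 2 \<le> \<bar>Delta2 (levy b \<alpha>) x h\<bar>"
    using exists_Delta2_levy_ge[OF assms(1,2) off_grid] meets_grid_adic_level[of b y j k] grid assms(1)
    by (auto simp: q_def L_def)
  then have "\<bar>Delta2 (levy b \<alpha>) x h\<bar> \<in> S"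
    unfolding S_def using in_three_lambda[of "x + y"] in_three_lambda[of "x + y + 2*h"]
    by (intro CollectI exI[of _ "x + y"] exI[of _ h]) (simp add: Delta2_levy_shift algebra_simps)
  moreover have "bdd_above S" using ub by (auto simp: bdd_above_def)
  ultimately show "q ^ Suc L / 2 \<le> osc2 (levy_shift b \<alpha> y) b j k"
    unfolding osc using xh(3) by (intro cSup_upper2)
  show "osc2 (levy_shift b \<alpha> y) b j k \<le> 2 / (1 - q) * q ^ L"
    unfolding osc using ub \<open>\<bar>Delta2 (levy b \<alpha>) x h\<bar> \<in> S\<close> by (intro cSup_least) auto
qed

lemma ln_osc2_levy_shift_bound:
  assumes "b \<ge> 2" "\<alpha> > 0"
  obtains M where "\<And>j k. osc2 (levy_shift b \<alpha> y) b j k > 0"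
    "\<And>j k. \<bar>ln (osc2 (levy_shift b \<alpha> y) b j k) + \<alpha> * real (adic_level b y j k) * ln b\<bar> \<le> M"
proof -
  define q where "q = real b powr (-\<alpha>)"
  have q: "0 < q" "q < 1"
    using assms by (auto simp: q_def powr_minus_divide)
  have ln_q_pow: "ln (q ^ n) = - \<alpha> * real n * ln b" for n
    using assms q by (simp add: q_def ln_realpow ln_powr)
  define M where "M = \<alpha> * ln b + ln 2 + ln (2 / (1 - q))"
  have "ln 1 \<le> ln (2 / (1 - q))" using q by (subst ln_le_cancel_iff) auto
  then have M: "\<alpha> * ln b + ln 2 \<le> M" "ln (2 / (1 - q)) \<le> M"
    using assms by (auto simp: M_def)
  show thesis
  proof
    fix j k
    define d where "d = osc2 (levy_shift b \<alpha> y) b j k"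
    define L where "L = adic_level b y j k"
    have lower: "q ^ Suc L / 2 \<le> d" and upper: "d \<le> 2 / (1 - q) * q ^ L"
      using osc2_levy_shift_bounds[OF assms] by (simp_all add: d_def L_def q_def)
    have "0 < q ^ Suc L / 2" using q by simp
    with lower show "d > 0" by linarith
    have "- (\<alpha> * ln b + ln 2) - \<alpha> * L * ln b = ln (q ^ Suc L) - ln 2"
      unfolding ln_q_pow by (simp add: algebra_simps)
    also have "\<dots> = ln (q ^ Suc L / 2)"
      using q by (simp add: ln_divide_pos)
    also have "\<dots> \<le> ln d" using lower q \<open>d > 0\<close> by (subst ln_le_cancel_iff) auto
    finally have ln_lower: "- (\<alpha> * ln b + ln 2) \<le> ln d + \<alpha> * L * ln b" by simp
    have "ln d \<le> ln (2 / (1 - q) * q ^ L)"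
      using upper q \<open>d > 0\<close> by (subst ln_le_cancel_iff) auto
    also have "\<dots> = ln (2 / (1 - q)) + ln (q ^ L)"
      using q by (intro ln_mult_pos) auto
    finally have ln_upper: "ln d + \<alpha> * L * ln b \<le> ln (2 / (1 - q))"
      unfolding ln_q_pow by simp
    from ln_lower ln_upper M show "\<bar>ln d + \<alpha> * real L * ln b\<bar> \<le> M" by linarith
  qed
qed

section \<open>Counting grid levels\<close>

lemma adic_level_zero_zero: "b > 0 \<Longrightarrow> adic_level b 0 j 0 = 0"
proof -
  assume "b > 0"
  then have "meets_grid b 0 0 (three_lambda b j 0)"
    unfolding meets_grid_def three_lambda_def by (intro exI[of _ 0]) simp
  then show ?thesis unfolding adic_level_def by simp
qed

lemma meets_grid_zero_imp_dvd:
  assumes "b > 0" "I \<le> j" "meets_grid b I 0 (three_lambda b j k)"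
  obtains e :: int where "e \<in> {-1, 0, 1}" "int b ^ (j - I) dvd int k + e"
proof -
  obtain z :: int where z: "(real k - 1) / real b ^ j \<le> of_int z / real b ^ I"
    "of_int z / real b ^ I < (real k + 2) / real b ^ j"
    using assms(3) by (auto simp: meets_grid_def three_lambda_def)
  define P where "P = int b ^ (j - I)"
  have "real b ^ j = real b ^ I * real b ^ (j - I)"
    using assms(2) by (simp flip: power_add)
  then have "of_int z / real b ^ I = of_int (z * P) / real b ^ j"
    using assms(1) by (simp add: P_def)
  then have "of_int (int k - 1) \<le> (of_int (z * P) :: real)" "(of_int (z * P) :: real) < of_int (int k + 2)"
    using z assms(1) by (simp_all add: divide_le_cancel divide_less_cancel)
  then have "int k - 1 \<le> z * P" "z * P < int k + 2"
    by (simp_all only: of_int_le_iff of_int_less_iff)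
  then have "z * P - int k \<in> {-1, 0, 1}" by auto
  moreover have "P dvd int k + (z * P - int k)" by simp
  ultimately show ?thesis using that P_def by blast
qed

lemma adic_level_zero_ge:
  assumes "b \<ge> 2" "j \<ge> 2"
  shows "j - 1 \<le> adic_level b 0 j (b^2 * t + 2)"
proof (rule ccontr)
  define L where "L = adic_level b 0 j (b^2 * t + 2)"
  assume "\<not> j - 1 \<le> L"
  then have "L \<le> j" "2 \<le> j - L" using assms(2) by auto
  have "b > 0" using assms(1) by simp
  obtain e :: int where e: "e \<in> {-1, 0, 1}" "int b ^ (j - L) dvd int (b^2 * t + 2) + e"
    using meets_grid_zero_imp_dvd[OF \<open>b > 0\<close> \<open>L \<le> j\<close>]
      meets_grid_adic_level[OF \<open>b > 0\<close>] unfolding L_def by blast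
  have "int b ^ 2 dvd int b ^ (j - L)" using \<open>2 \<le> j - L\<close> by (rule le_imp_power_dvd)
  moreover have "int (b^2 * t + 2) + e = int b ^ 2 * int t + (2 + e)" by simp
  ultimately have "int b ^ 2 dvd int b ^ 2 * int t + (2 + e)" using e(2) by (metis dvd_trans)
  then have "int b ^ 2 dvd 2 + e" by (simp add: dvd_add_right_iff)
  moreover have "2 ^ 2 \<le> int b ^ 2" using assms(1) by (intro power_mono) auto
  ultimately show False using e(1) by (auto dest: zdvd_imp_le)
qed

lemma card_adic_level_zero_eq:
  assumes "b > 0" "I \<le> j"
  shows "card {k \<in> {..<b^j}. adic_level b 0 j k = I} \<le> 3 * (b^I + 2)"
proof -
  define P where "P = int b ^ (j - I)"
  have P: "P \<ge> 1" using assms(1) by (simp add: P_def)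
  have bj: "int b ^ j = int b ^ I * P"
    using assms(2) by (simp add: P_def flip: power_add)
  define A where "A = {-1..int (b^I)} \<times> {-1, 0, 1::int}"
  have fin: "finite A" by (simp add: A_def)
  have "{k \<in> {..<b^j}. adic_level b 0 j k = I} \<subseteq> (\<lambda>(z, e). nat (z * P - e)) ` A"
  proof
    fix k assume k: "k \<in> {k \<in> {..<b^j}. adic_level b 0 j k = I}"
    then obtain e :: int where e: "e \<in> {-1, 0, 1}" "P dvd int k + e"
      using meets_grid_zero_imp_dvd[OF assms] meets_grid_adic_level[OF assms(1), of 0 j k]
      unfolding P_def by auto
    then obtain z where z: "int k + e = z * P" by (metis dvd_def mult.commute)
    have "int k < int b ^ j" using k by (simp flip: of_nat_power)
    then have "z * P \<le> int b ^ I * P" using z e(1) bj by auto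
    then have "z \<le> int (b^I)" using P by simp
    moreover have "z \<ge> -1"
    proof (rule ccontr)
      assume "\<not> z \<ge> -1"
      then have "z * P \<le> -2 * P" using P by (intro mult_right_mono) auto
      then show False using z e(1) P by auto
    qed
    ultimately have "(z, e) \<in> A" using e(1) by (simp add: A_def)
    moreover have "k = nat (z * P - e)" using z by simp
    ultimately show "k \<in> (\<lambda>(z, e). nat (z * P - e)) ` A" by force
  qed
  then have "card {k \<in> {..<b^j}. adic_level b 0 j k = I} \<le> card ((\<lambda>(z, e). nat (z * P - e)) ` A)"
    using fin by (intro card_mono) auto
  also have "\<dots> \<le> card A" using fin by (rule card_image_le)
  also have "card A = 3 * (b^I + 2)"
    by (simp add: A_def card_cartesian_product nat_add_distrib flip: of_nat_power)
  finally show ?thesis .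
qed

definition level_sum :: "nat \<Rightarrow> real \<Rightarrow> nat \<Rightarrow> real" where
  "level_sum b \<beta> j = (\<Sum>k<b^j. real b powr (- \<beta> * real (adic_level b 0 j k)))"

lemma one_le_level_sum:
  assumes "b > 0"
  shows "1 \<le> level_sum b \<beta> j"
proof -
  have "1 = real b powr (- \<beta> * real (adic_level b 0 j 0))"
    using adic_level_zero_zero[OF assms] assms by simp
  also have "\<dots> \<le> level_sum b \<beta> j"
    unfolding level_sum_def using assms by (intro member_le_sum) auto
  finally show ?thesis .
qed

lemma level_sum_ge_deep_cells:
  assumes "b \<ge> 2" "j \<ge> 2"
  shows "real (b ^ (j - 2)) * (min 1 (real b powr \<beta>) * real b powr (- \<beta> * j)) \<le> level_sum b \<beta> j"
proof -
  define f where "f k = real b powr (- \<beta> * real (adic_level b 0 j k))" for k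
  define g where "g t = b^2 * t + 2" for t
  define c where "c = min 1 (real b powr \<beta>) * real b powr (- \<beta> * j)"
  have "c \<le> f (g t)" for t
  proof -
    define L where "L = adic_level b 0 j (g t)"
    have "j - 1 \<le> L" "L \<le> j"
      using adic_level_zero_ge[OF assms] adic_level_le[of b 0 j "g t"] assms(1)
      unfolding L_def g_def by auto
    then have "L = j \<or> L = j - 1" by linarith
    then have "real b powr (- \<beta> * L) = real b powr (- \<beta> * j) \<or>
        real b powr (- \<beta> * L) = real b powr \<beta> * real b powr (- \<beta> * j)"
      using assms(2) by (auto simp: of_nat_diff algebra_simps simp flip: powr_add)
    moreover have "0 \<le> real b powr (- \<beta> * j)" by simp
    note mult_right_mono[OF min.cobounded1[of 1 "real b powr \<beta>"] this]
      mult_right_mono[OF min.cobounded2[of 1 "real b powr \<beta>"] this]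
    ultimately show ?thesis
      unfolding c_def f_def L_def[symmetric] by auto
  qed
  have "b ^ 2 * b ^ (j - 2) = b ^ j" using assms(2) by (metis le_add_diff_inverse power_add)
  have "g t < b ^ j" if "t < b^(j-2)" for t
  proof -
    have "b^2 * Suc t \<le> b^2 * b^(j-2)" using that by (intro mult_left_mono) auto
    moreover have "2 ^ 2 \<le> b ^ 2" using assms(1) by (intro power_mono) auto
    ultimately show ?thesis using \<open>b ^ 2 * b ^ (j - 2) = b ^ j\<close> by (simp add: g_def)
  qed
  then have "g ` {..<b^(j-2)} \<subseteq> {..<b^j}" by auto
  have "real (b ^ (j - 2)) * c \<le> (\<Sum>t<b^(j-2). f (g t))"
    using sum_mono[of "{..<b^(j-2)}" "\<lambda>_. c" "\<lambda>t. f (g t)"] \<open>\<And>t. c \<le> f (g t)\<close> by simp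
  also have "\<dots> = (\<Sum>k\<in>g ` {..<b^(j-2)}. f k)"
    using assms(1) by (simp add: sum.reindex inj_on_def g_def)
  also have "\<dots> \<le> level_sum b \<beta> j"
    unfolding level_sum_def f_def[symmetric] using \<open>g ` {..<b^(j-2)} \<subseteq> {..<b^j}\<close>
    by (intro sum_mono2) (auto simp: f_def)
  finally show ?thesis unfolding c_def .
qed

lemma level_sum_lower:
  assumes "b \<ge> 2" "j \<ge> 2"
  shows "min 1 (real b powr \<beta>) / real b ^ 2 * real b powr (max 0 (1 - \<beta>) * j) \<le> level_sum b \<beta> j"
proof (cases "\<beta> \<le> 1")
  case True
  have "max 0 (1 - \<beta>) * real j = real j + - \<beta> * real j"
    using True by (simp add: algebra_simps)
  then have "real b powr (max 0 (1 - \<beta>) * j) = real b powr real j * real b powr (- \<beta> * j)"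
    by (simp only: powr_add)
  also have "\<dots> = real b ^ j * real b powr (- \<beta> * j)"
    using assms(1) by (simp add: powr_realpow)
  also have "real b ^ j = real b ^ 2 * real b ^ (j - 2)"
    using assms(2) by (metis le_add_diff_inverse power_add)
  finally have "min 1 (real b powr \<beta>) / real b ^ 2 * real b powr (max 0 (1 - \<beta>) * j)
      = real (b ^ (j - 2)) * (min 1 (real b powr \<beta>) * real b powr (- \<beta> * j))"
    using assms(1) by simp
  with level_sum_ge_deep_cells[OF assms] show ?thesis by simp
next
  case False
  have "min 1 (real b powr \<beta>) / real b ^ 2 \<le> 1 / real b ^ 2"
    by (intro divide_right_mono) auto
  also have "\<dots> \<le> 1" using assms(1) by simp
  also have "\<dots> \<le> level_sum b \<beta> j" using assms(1) by (intro one_le_level_sum) simp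
  finally show ?thesis using False assms(1) by simp
qed

lemma level_sum_upper:
  assumes "b \<ge> 2"
  shows "level_sum b \<beta> j \<le> 9 * (real j + 1) * real b powr (max 0 (1 - \<beta>) * j)"
proof -
  define f where "f I = real b powr (- \<beta> * real I)" for I :: nat
  define M where "M = real b powr (max 0 (1 - \<beta>) * j)"
  have "level_sum b \<beta> j = (\<Sum>I\<le>j. \<Sum>k\<in>{k \<in> {..<b^j}. adic_level b 0 j k = I}. f (adic_level b 0 j k))"
    unfolding level_sum_def f_def using adic_level_le[of b] assms
    by (intro sum.group[symmetric]) auto
  also have "\<dots> = (\<Sum>I\<le>j. real (card {k \<in> {..<b^j}. adic_level b 0 j k = I}) * f I)"
    by simp
  also have "\<dots> \<le> (\<Sum>I\<le>j. 9 * M)"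
  proof (intro sum_mono)
    fix I assume "I \<in> {..j}"
    then have "real (card {k \<in> {..<b^j}. adic_level b 0 j k = I}) \<le> 3 * (real b ^ I + 2)"
      using card_adic_level_zero_eq[of b I j] assms by (simp flip: of_nat_power)
    also have "\<dots> \<le> 9 * real b ^ I" using assms by simp
    finally have card: "real (card {k \<in> {..<b^j}. adic_level b 0 j k = I}) \<le> 9 * real b ^ I" .
    have "(1 - \<beta>) * I \<le> max 0 (1 - \<beta>) * I" by (intro mult_right_mono) auto
    also have "\<dots> \<le> max 0 (1 - \<beta>) * j" using \<open>I \<in> {..j}\<close> by (intro mult_left_mono) auto
    finally have "real b powr ((1 - \<beta>) * I) \<le> M"
      unfolding M_def using assms by (intro powr_mono) auto
    moreover have "real b ^ I * f I = real b powr ((1 - \<beta>) * I)"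
      unfolding f_def using assms by (simp add: powr_realpow[symmetric] powr_add[symmetric] algebra_simps)
    moreover have "real (card {k \<in> {..<b^j}. adic_level b 0 j k = I}) * f I \<le> 9 * real b ^ I * f I"
      using card by (intro mult_right_mono) (auto simp: f_def)
    ultimately show "real (card {k \<in> {..<b^j}. adic_level b 0 j k = I}) * f I \<le> 9 * M"
      by simp
  qed
  also have "\<dots> = 9 * (real j + 1) * M" by simp
  finally show ?thesis unfolding M_def .
qed

section \<open>Structure and scaling functions\<close>

lemma exp_bounds_of_ln_dist_le:
  fixes u v :: real
  assumes "u > 0" "v > 0" "\<bar>ln u - ln v\<bar> \<le> M"
  shows "exp (-M) * v \<le> u" "u \<le> exp M * v"
proof -
  have "exp (-M) * v = exp (ln v - M)" and "exp M * v = exp (ln v + M)"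
    using assms(2) by (simp_all add: exp_diff exp_add exp_minus field_simps)
  moreover have "exp (ln v - M) \<le> exp (ln u)" "exp (ln u) \<le> exp (ln v + M)"
    using assms(3) by auto
  ultimately show "exp (-M) * v \<le> u" "u \<le> exp M * v"
    using assms(1) by simp_all
qed

lemma osc2_product_comparable:
  fixes \<alpha>1 \<alpha>2 r1 r2 y :: real and w :: int
  assumes "b \<ge> 2" "\<alpha>1 > 0" "\<alpha>2 > 0" "y = of_int w / real b ^ m"
  defines "\<beta> \<equiv> \<alpha>1 * r1 + \<alpha>2 * r2"
  obtains M where
    "\<And>j k. exp (-M) * real b powr (- \<beta> * adic_level b 0 j k)
      \<le> osc2 (levy b \<alpha>1) b j k powr r1 * osc2 (levy_shift b \<alpha>2 y) b j k powr r2"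
    "\<And>j k. osc2 (levy b \<alpha>1) b j k powr r1 * osc2 (levy_shift b \<alpha>2 y) b j k powr r2
      \<le> exp M * real b powr (- \<beta> * adic_level b 0 j k)"
proof -
  have levy: "levy b \<alpha>1 = levy_shift b \<alpha>1 0" by (simp add: levy_shift_def [abs_def])
  obtain M1 where pos1: "\<And>j k. osc2 (levy b \<alpha>1) b j k > 0"
    and M1: "\<And>j k. \<bar>ln (osc2 (levy b \<alpha>1) b j k) + \<alpha>1 * adic_level b 0 j k * ln b\<bar> \<le> M1"
    using ln_osc2_levy_shift_bound[OF assms(1,2), of 0] unfolding levy by blast
  obtain M2 where pos2: "\<And>j k. osc2 (levy_shift b \<alpha>2 y) b j k > 0"
    and M2: "\<And>j k. \<bar>ln (osc2 (levy_shift b \<alpha>2 y) b j k) + \<alpha>2 * adic_level b y j k * ln b\<bar> \<le> M2"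
    using ln_osc2_levy_shift_bound[OF assms(1,3)] by blast
  define M where "M = \<bar>r1\<bar> * M1 + \<bar>r2\<bar> * (M2 + \<alpha>2 * m * ln b)"
  have dist: "\<bar>ln (osc2 (levy b \<alpha>1) b j k powr r1 * osc2 (levy_shift b \<alpha>2 y) b j k powr r2)
      - ln (real b powr (- \<beta> * adic_level b 0 j k))\<bar> \<le> M" for j k
  proof -
    define L1 where "L1 = adic_level b 0 j k"
    define L2 where "L2 = adic_level b y j k"
    define e1 where "e1 = ln (osc2 (levy b \<alpha>1) b j k) + \<alpha>1 * L1 * ln b"
    define e2 where "e2 = ln (osc2 (levy_shift b \<alpha>2 y) b j k) + \<alpha>2 * L2 * ln b"
    have "\<bar>real L1 - real L2\<bar> \<le> m"
      using adic_level_shift_dist[OF _ assms(4), of j k] assms(1) by (simp add: L1_def L2_def)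
    then have "\<bar>\<alpha>2 * (real L1 - real L2) * ln b\<bar> \<le> \<alpha>2 * m * ln b"
      using assms(1,3) by (simp add: abs_mult mult_right_mono)
    moreover have "ln (osc2 (levy b \<alpha>1) b j k powr r1 * osc2 (levy_shift b \<alpha>2 y) b j k powr r2)
        - ln (real b powr (- \<beta> * L1)) = r1 * e1 + r2 * (e2 + \<alpha>2 * (real L1 - real L2) * ln b)"
      using pos1[of j k] pos2[of j k] assms(1)
      by (simp add: ln_mult_pos ln_powr e1_def e2_def \<beta>_def algebra_simps)
    moreover have "\<bar>e1\<bar> \<le> M1" "\<bar>e2\<bar> \<le> M2"
      using M1 M2 by (simp_all add: e1_def e2_def L1_def L2_def)
    ultimately have "\<bar>e2 + \<alpha>2 * (real L1 - real L2) * ln b\<bar> \<le> M2 + \<alpha>2 * m * ln b"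
      by (smt (verit) abs_triangle_ineq)
    then have "\<bar>r1 * e1\<bar> \<le> \<bar>r1\<bar> * M1"
      "\<bar>r2 * (e2 + \<alpha>2 * (real L1 - real L2) * ln b)\<bar> \<le> \<bar>r2\<bar> * (M2 + \<alpha>2 * m * ln b)"
      using \<open>\<bar>e1\<bar> \<le> M1\<close> unfolding abs_mult by (simp_all add: mult_left_mono)
    with \<open>_ = r1 * e1 + _\<close> show ?thesis unfolding L1_def[symmetric] M_def by linarith
  qed
  have pos: "osc2 (levy b \<alpha>1) b j k powr r1 * osc2 (levy_shift b \<alpha>2 y) b j k powr r2 > 0" for j k
    using pos1[of j k] pos2[of j k] by simp
  have "real b powr (- \<beta> * adic_level b 0 j k) > 0" for j k
    using assms(1) by simp
  from exp_bounds_of_ln_dist_le[OF pos this dist] show thesis by (rule that)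
qed

lemma structure_fun_comparable:
  fixes \<alpha>1 \<alpha>2 r1 r2 y :: real and w :: int
  assumes "b \<ge> 2" "\<alpha>1 > 0" "\<alpha>2 > 0" "y = of_int w / real b ^ m"
  defines "\<beta> \<equiv> \<alpha>1 * r1 + \<alpha>2 * r2"
  obtains M where
    "\<And>j. exp (-M) * (real b powr (- real j) * level_sum b \<beta> j) \<le> structure_fun b \<alpha>1 \<alpha>2 y r1 r2 j"
    "\<And>j. structure_fun b \<alpha>1 \<alpha>2 y r1 r2 j \<le> exp M * (real b powr (- real j) * level_sum b \<beta> j)"
proof -
  define t where "t j k = osc2 (levy b \<alpha>1) b j k powr r1 * osc2 (levy_shift b \<alpha>2 y) b j k powr r2" for j k
  define u where "u j k = real b powr (- \<beta> * adic_level b 0 j k)" for j k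
  obtain M where lower: "\<And>j k. exp (-M) * u j k \<le> t j k" and upper: "\<And>j k. t j k \<le> exp M * u j k"
    using osc2_product_comparable[OF assms(1-4)] unfolding t_def u_def \<beta>_def by blast
  have S: "structure_fun b \<alpha>1 \<alpha>2 y r1 r2 j = real b powr (- real j) * (\<Sum>k<b^j. t j k)" for j
    unfolding structure_fun_def t_def ..
  have L: "exp c * (real b powr (- real j) * level_sum b \<beta> j)
      = real b powr (- real j) * (\<Sum>k<b^j. exp c * u j k)" for c j
    unfolding level_sum_def u_def by (simp add: sum_distrib_left mult_ac)
  show thesis
  proof
    show "exp (-M) * (real b powr (- real j) * level_sum b \<beta> j) \<le> structure_fun b \<alpha>1 \<alpha>2 y r1 r2 j" for j
      unfolding S L by (intro mult_left_mono sum_mono lower) simp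
    show "structure_fun b \<alpha>1 \<alpha>2 y r1 r2 j \<le> exp M * (real b powr (- real j) * level_sum b \<beta> j)" for j
      unfolding S L by (intro mult_left_mono sum_mono upper) simp
  qed
qed

lemma structure_fun_bounds:
  fixes \<alpha>1 \<alpha>2 r1 r2 y :: real and w :: int
  assumes "b \<ge> 2" "\<alpha>1 > 0" "\<alpha>2 > 0" "y = of_int w / real b ^ m"
  defines "\<gamma> \<equiv> min (\<alpha>1 * r1 + \<alpha>2 * r2) 1"
  obtains c C where "c > 0" "C > 0"
    "\<And>j. j \<ge> 2 \<Longrightarrow> c * real b powr (- \<gamma> * j) \<le> structure_fun b \<alpha>1 \<alpha>2 y r1 r2 j"
    "\<And>j. j \<ge> 2 \<Longrightarrow> structure_fun b \<alpha>1 \<alpha>2 y r1 r2 j \<le> C * (real j + 1) * real b powr (- \<gamma> * j)"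
proof -
  define \<beta> where "\<beta> = \<alpha>1 * r1 + \<alpha>2 * r2"
  define S where "S = structure_fun b \<alpha>1 \<alpha>2 y r1 r2"
  obtain M where lower: "\<And>j. exp (-M) * (real b powr (- real j) * level_sum b \<beta> j) \<le> S j"
    and upper: "\<And>j. S j \<le> exp M * (real b powr (- real j) * level_sum b \<beta> j)"
    using structure_fun_comparable[OF assms(1-4)] unfolding S_def \<beta>_def by blast
  have scale: "real b powr (- real j) * (x * real b powr (max 0 (1 - \<beta>) * j)) = x * real b powr (- \<gamma> * j)"
    for x j
  proof -
    have "- real j + max 0 (1 - \<beta>) * j = - \<gamma> * j"
      unfolding \<gamma>_def \<beta>_def[symmetric] by (simp add: max_def min_def algebra_simps)
    then show ?thesis by (simp add: powr_add[symmetric] mult_ac)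
  qed
  define c where "c = exp (-M) * (min 1 (real b powr \<beta>) / real b ^ 2)"
  define C where "C = exp M * 9"
  show thesis
  proof
    show "c > 0" "C > 0" using assms(1) by (simp_all add: c_def C_def)
    show "c * real b powr (- \<gamma> * j) \<le> structure_fun b \<alpha>1 \<alpha>2 y r1 r2 j" if "j \<ge> 2" for j
    proof -
      have "c * real b powr (- \<gamma> * j)
          = exp (-M) * (real b powr (- real j) * (min 1 (real b powr \<beta>) / real b ^ 2 * real b powr (max 0 (1 - \<beta>) * j)))"
        unfolding scale c_def by simp
      also have "\<dots> \<le> exp (-M) * (real b powr (- real j) * level_sum b \<beta> j)"
        using level_sum_lower[OF assms(1) that] by (intro mult_left_mono) auto
      finally show ?thesis using lower[of j] unfolding S_def by linarith
    qed
    show "structure_fun b \<alpha>1 \<alpha>2 y r1 r2 j \<le> C * (real j + 1) * real b powr (- \<gamma> * j)" for j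
    proof -
      have "exp M * (real b powr (- real j) * level_sum b \<beta> j)
          \<le> exp M * (real b powr (- real j) * (9 * (real j + 1) * real b powr (max 0 (1 - \<beta>) * j)))"
        using level_sum_upper[OF assms(1)] by (intro mult_left_mono) auto
      also have "\<dots> = C * (real j + 1) * real b powr (- \<gamma> * j)"
        unfolding scale C_def by simp
      finally show ?thesis using upper[of j] unfolding S_def by linarith
    qed
  qed
qed

lemma tendsto_ln_div_ln_powr:
  fixes b c C \<gamma> :: real and S :: "nat \<Rightarrow> real"
  assumes "b > 1" "c > 0" "C > 0"
    and lower: "\<And>j. j \<ge> 2 \<Longrightarrow> c * b powr (- \<gamma> * j) \<le> S j"
    and upper: "\<And>j. j \<ge> 2 \<Longrightarrow> S j \<le> C * (real j + 1) * b powr (- \<gamma> * j)"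
  shows "(\<lambda>j. ln (S j) / ln (b powr - real j)) \<longlonglongrightarrow> \<gamma>"
proof (rule LIM_zero_cancel, rule Lim_null_comparison)
  define K where "K = \<bar>ln c\<bar> + \<bar>ln C\<bar>"
  have "(\<lambda>j. K / ln b * (1 / real j) + 1 / ln b * (ln (real j + 1) / real j)) \<longlonglongrightarrow> K / ln b * 0 + 1 / ln b * 0"
    by (intro tendsto_intros) real_asymp+
  then show "(\<lambda>j. (K + ln (real j + 1)) / (real j * ln b)) \<longlonglongrightarrow> 0"
    by (simp add: add_divide_distrib mult.commute)
  show "\<forall>\<^sub>F j in sequentially. norm (ln (S j) / ln (b powr - real j) - \<gamma>) \<le> (K + ln (real j + 1)) / (real j * ln b)"
    unfolding eventually_sequentially
  proof (intro exI allI impI)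
    fix j :: nat assume "j \<ge> 2"
    have D: "real j * ln b > 0" using \<open>j \<ge> 2\<close> assms(1) by simp
    have E: "ln (b powr (- \<gamma> * j)) = - \<gamma> * (real j * ln b)"
      using assms(1) by (simp add: ln_powr)
    have pos: "0 < c * b powr (- \<gamma> * j)" using assms(1,2) by simp
    have "ln c + ln (b powr (- \<gamma> * j)) = ln (c * b powr (- \<gamma> * j))"
      using assms(1,2) by (intro ln_mult_pos[symmetric]) auto
    also have "\<dots> \<le> ln (S j)"
      using lower[OF \<open>j \<ge> 2\<close>] pos by (subst ln_le_cancel_iff) auto
    finally have ln_lower: "ln c + ln (b powr (- \<gamma> * j)) \<le> ln (S j)" .
    have "ln (S j) \<le> ln (C * (real j + 1) * b powr (- \<gamma> * j))"
      using upper[OF \<open>j \<ge> 2\<close>] lower[OF \<open>j \<ge> 2\<close>] pos by (subst ln_le_cancel_iff) auto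
    also have "\<dots> = ln C + ln (real j + 1) + ln (b powr (- \<gamma> * j))"
      using assms(1,3) by (simp add: ln_mult_pos)
    finally have "\<bar>ln (S j) + \<gamma> * (real j * ln b)\<bar> \<le> K + ln (real j + 1)"
      using ln_lower ln_ge_zero[of "real j + 1"] unfolding E K_def by linarith
    moreover have "ln (S j) / ln (b powr - real j) - \<gamma> = - (ln (S j) + \<gamma> * (real j * ln b)) / (real j * ln b)"
      using D assms(1) \<open>j \<ge> 2\<close> by (simp add: ln_powr diff_divide_distrib add_divide_distrib)
    ultimately show "norm (ln (S j) / ln (b powr - real j) - \<gamma>) \<le> (K + ln (real j + 1)) / (real j * ln b)"
      using D by (simp add: abs_minus_cancel divide_right_mono)
  qed
qed

theorem mainTheorem4:
  fixes b :: nat and \<alpha>1 \<alpha>2 y r1 r2 :: real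
  assumes "b \<ge> 2" and "\<alpha>1 > 0" and "\<alpha>2 > 0"
    and "0 \<le> y" and "y < 1"
    and "\<exists>m::nat. \<exists>k::nat. y = real k / real b ^ m"
  shows "scaling_fun b \<alpha>1 \<alpha>2 y r1 r2 =
           (if 1 - \<alpha>1 * r1 - \<alpha>2 * r2 \<ge> 0 then ereal (\<alpha>1 * r1 + \<alpha>2 * r2) else ereal 1)"
proof -
  obtain m k where "y = of_int (int k) / real b ^ m" using assms(6) by auto
  define \<gamma> where "\<gamma> = min (\<alpha>1 * r1 + \<alpha>2 * r2) 1"
  obtain c C where "c > 0" "C > 0"
    and "\<And>j. j \<ge> 2 \<Longrightarrow> c * real b powr (- \<gamma> * j) \<le> structure_fun b \<alpha>1 \<alpha>2 y r1 r2 j"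
    and "\<And>j. j \<ge> 2 \<Longrightarrow> structure_fun b \<alpha>1 \<alpha>2 y r1 r2 j \<le> C * (real j + 1) * real b powr (- \<gamma> * j)"
    using structure_fun_bounds[OF assms(1-3) \<open>y = _\<close>] unfolding \<gamma>_def by blast
  moreover have "real b > 1" using assms(1) by simp
  ultimately have "(\<lambda>j. ln (structure_fun b \<alpha>1 \<alpha>2 y r1 r2 j) / ln (real b powr - real j)) \<longlonglongrightarrow> \<gamma>"
    by (intro tendsto_ln_div_ln_powr)
  then have "scaling_fun b \<alpha>1 \<alpha>2 y r1 r2 = ereal \<gamma>"
    unfolding scaling_fun_def by (intro lim_imp_Liminf tendsto_ereal) simp_all
  then show ?thesis by (simp add: \<gamma>_def min_def)
qed

end
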